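(* Let $d\ge2$, $R>0$, and let $A\subset\mathbb{R}^d$ be a body with $\mathrm{reach}(A)\ge R$. Then $A$ is an $R$-body and, for every $a\in\partial A$, the set $\mathcal{N}_R(A,a)$ is spherically convex.
   Context: A body is a nonempty closed subset of $\mathbb{R}^d$; $S^{d-1}$ the unit sphere; $B(x)=\{y:|y-x|<R\}$; $co(\cdot)$ convex hull. A body $A$ is an $R$-body if every $y\notin A$ lies in some open ball of radius $R$ disjoint from $A$. For $a\in\partial A$, $\mathcal{N}_R(A,a)=\{v\in S^{d-1}: A\cap B(a+Rv)=\emptyset\}$. A set $\mathcal K\subset S^{d-1}$ is spherically convex if $co(K)\cap S^{d-1}=\mathcal K$, where $K=\{\lambda v:\lambda\ge0,v\in\mathcal K\}$. $\mathrm{Unp}(A)$ is the set of points with a unique nearest point in $A$; $\mathrm{reach}(A,a)=\sup\{\rho>0:\{x:|x-a|<\rho\}\subset\mathrm{Unp}(A)\}$, $\mathrm{reach}(A)=\inf_{a\in A}\mathrm{reach}(A,a)$. *)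

theory Defs
  imports "HOL-Analysis.Analysis"
begin

definition is_body :: "'a::euclidean_space set \<Rightarrow> bool" where
  "is_body A \<longleftrightarrow> A \<noteq> {} \<and> closed A"

definition R_body :: "real \<Rightarrow> 'a::euclidean_space set \<Rightarrow> bool" where
  "R_body R A \<longleftrightarrow> is_body A \<and>
     (\<forall>y. y \<notin> A \<longrightarrow> (\<exists>c. y \<in> ball c R \<and> A \<inter> ball c R = {}))"

definition normals_R :: "real \<Rightarrow> 'a::euclidean_space set \<Rightarrow> 'a \<Rightarrow> 'a set" where
  "normals_R R A a = {v \<in> sphere 0 1. A \<inter> ball (a + R *\<^sub>R v) R = {}}"

definition sph_convex :: "'a::euclidean_space set \<Rightarrow> bool" where
  "sph_convex S \<longleftrightarrow> S \<subseteq> sphere 0 1 \<and>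
     convex hull {t *\<^sub>R v | t v. t \<ge> 0 \<and> v \<in> S} \<inter> sphere 0 1 = S"

definition Unp :: "'a::euclidean_space set \<Rightarrow> 'a set" where
  "Unp A = {x. \<exists>!a. a \<in> A \<and> (\<forall>b\<in>A. dist x a \<le> dist x b)}"

text \<open>Local reach (in the extended reals; the supremum of the empty set is -\<infinity>).\<close>
definition reach_at :: "'a::euclidean_space set \<Rightarrow> 'a \<Rightarrow> ereal" where
  "reach_at A a = Sup {ereal \<rho> | \<rho>. \<rho> > 0 \<and> ball a \<rho> \<subseteq> Unp A}"

definition reach :: "'a::euclidean_space set \<Rightarrow> ereal" where
  "reach A = (INF a\<in>A. reach_at A a)"

end

theory Submission
  imports Defs
begin

text \<open>
  Positive reach makes the metric projection onto \<open>A\<close> single-valued, hence continuous, on the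
  open \<open>R\<close>-neighbourhood of \<open>A\<close>. Suppose a ball of radius \<open>T < R\<close> touching \<open>A\<close> at \<open>a\<close> in direction
  \<open>u\<close> misses \<open>A\<close>. Brouwer's theorem, applied to the map sending \<open>w\<close> to the point at distance
  \<open>h\<close> from the centre \<open>z\<close> in the direction away from the projection of \<open>w\<close>, yields a point \<open>w\<close>
  whose projection lies on the ray from \<open>w\<close> through \<open>z\<close>; that projection is then also a nearest
  point of \<open>z\<close>, so it is \<open>a\<close>, and the ball of radius \<open>T + h\<close> along \<open>u\<close> still misses \<open>A\<close>. Hence
  every touching ball can be blown up to radius \<open>R\<close>. At the projection of an exterior point this
  gives the \<open>R\<close>-body property. At \<open>a \<in> A\<close> it shows that the \<open>R\<close>-normals are exactly the unit
  vectors of the proximal normal cone, which is a convex cone; hence they are spherically convex.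
\<close>

lemma closest_point_eq_if_Unp:
  fixes A :: "'a::euclidean_space set"
  assumes "closed A" "A \<noteq> {}" "x \<in> Unp A" "p \<in> A" "\<forall>b\<in>A. dist x p \<le> dist x b"
  shows "closest_point A x = p"
  using assms closest_point_exists[OF assms(1,2), of x] unfolding Unp_def by blast

lemma Unp_nearest_point_isolated:
  fixes A :: "'a::euclidean_space set"
  assumes "closed A" "w \<in> Unp A" "p \<in> A" "\<forall>b\<in>A. dist w p \<le> dist w b" "e > 0"
  obtains m where "m > dist w p" "\<forall>c\<in>A - ball p e. m \<le> dist w c"
proof -
  define d where "d = dist w p"
  define K where "K = A \<inter> cball w (d + 1) - ball p e"
  have "closed K" unfolding K_def using assms(1) by (intro closed_Diff closed_Int) auto
  show thesis
  proof (cases "K = {}")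
    case True
    then show thesis using that[of "d + 1"] unfolding K_def d_def by force
  next
    case False
    obtain c0 where c0: "c0 \<in> K" "\<And>c. c \<in> K \<Longrightarrow> dist w c0 \<le> dist w c"
      using distance_attains_inf[OF \<open>closed K\<close> False] by blast
    have "dist w c0 > d"
    proof (rule ccontr)
      assume "\<not> dist w c0 > d"
      then have "\<forall>b\<in>A. dist w c0 \<le> dist w b" using assms(4) d_def by fastforce
      then have "c0 = p" using assms(2,3,4) c0(1) unfolding Unp_def K_def by blast
      then show False using c0(1) assms(5) unfolding K_def by simp
    qed
    then show thesis
      using that[of "min (dist w c0) (d + 1)"] c0 unfolding K_def d_def by force
  qed
qed

lemma continuous_at_closest_point_Unp:
  fixes A :: "'a::euclidean_space set"
  assumes "closed A" "A \<noteq> {}" "w \<in> Unp A"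
  shows "isCont (closest_point A) w"
proof (rule continuous_at_eps_delta[THEN iffD2], intro allI impI)
  fix e :: real assume "e > 0"
  define p where "p = closest_point A w"
  have p: "p \<in> A" "\<forall>b\<in>A. dist w p \<le> dist w b"
    using closest_point_exists[OF assms(1,2)] p_def by auto
  obtain m where m: "m > dist w p" "\<forall>c\<in>A - ball p e. m \<le> dist w c"
    using Unp_nearest_point_isolated[OF assms(1,3) p \<open>e > 0\<close>] by blast
  have "dist (closest_point A x) p < e" if x: "dist x w < (m - dist w p) / 2" for x
  proof -
    define q where "q = closest_point A x"
    have q: "q \<in> A" "dist x q \<le> dist x p"
      using closest_point_exists[OF assms(1,2)] p(1) q_def by auto
    have "dist w q \<le> dist w x + dist x q" by (rule dist_triangle)
    also have "\<dots> \<le> dist w x + (dist x w + dist w p)"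
      using q(2) dist_triangle[of x p w] by linarith
    finally have "dist w q < m" using x by (simp add: dist_commute)
    then have "q \<in> ball p e" using m(2) q(1) by (meson DiffI not_le)
    then show ?thesis by (simp add: q_def dist_commute)
  qed
  then show "\<exists>d>0. \<forall>x. dist x w < d \<longrightarrow> dist (closest_point A x) (closest_point A w) < e"
    using m(1) p_def by (intro exI[of _ "(m - dist w p) / 2"]) auto
qed

lemma mem_Unp_if_reach_ge:
  fixes A :: "'a::euclidean_space set"
  assumes "reach A \<ge> ereal R" "a \<in> A" "dist a w < R"
  shows "w \<in> Unp A"
proof -
  have "reach A \<le> reach_at A a" unfolding reach_def using assms(2) by (rule INF_lower)
  then have "ereal (dist a w) < reach_at A a"
    using assms by (meson ereal_less_eq(3) le_less_trans linorder_not_le order_trans)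
  then obtain x where "x \<in> {ereal \<rho> | \<rho>. \<rho> > 0 \<and> ball a \<rho> \<subseteq> Unp A}" "ereal (dist a w) < x"
    unfolding reach_at_def using less_Sup_iff by blast
  then show ?thesis by auto
qed

lemma nearest_point_along_segment:
  fixes p w :: "'a::real_normed_vector"
  assumes "\<forall>c\<in>A. dist w p \<le> dist w c" "0 \<le> \<theta>" "\<theta> \<le> 1"
  shows "\<forall>c\<in>A. dist (w - \<theta> *\<^sub>R (w - p)) p \<le> dist (w - \<theta> *\<^sub>R (w - p)) c"
proof
  fix c assume "c \<in> A"
  define z where "z = w - \<theta> *\<^sub>R (w - p)"
  have "z - p = (1 - \<theta>) *\<^sub>R (w - p)" by (simp add: z_def algebra_simps)
  then have zp: "dist z p = (1 - \<theta>) * dist w p" using assms(3) by (simp add: dist_norm)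
  have wz: "dist w z = \<theta> * dist w p" using assms(2) by (simp add: z_def dist_norm)
  have "dist w p \<le> dist w z + dist z c"
    using assms(1) \<open>c \<in> A\<close> dist_triangle[of w c z] by fastforce
  then show "dist z p \<le> dist z c" using zp wz by (simp add: algebra_simps)
qed

lemma ball_ray_mono:
  fixes a u :: "'a::real_normed_vector"
  assumes "norm u = 1" "t' \<le> t"
  shows "ball (a + t' *\<^sub>R u) t' \<subseteq> ball (a + t *\<^sub>R u) t"
proof
  fix x assume "x \<in> ball (a + t' *\<^sub>R u) t'"
  moreover have "dist (a + t *\<^sub>R u) (a + t' *\<^sub>R u) = t - t'"
    using assms by (simp add: dist_norm algebra_simps flip: scaleR_diff_left)
  ultimately show "x \<in> ball (a + t *\<^sub>R u) t"
    using dist_triangle[of "a + t *\<^sub>R u" x "a + t' *\<^sub>R u"] by auto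
qed

lemma disjoint_ball_ray_limit:
  fixes a u :: "'a::real_normed_vector"
  assumes "norm u = 1" "\<forall>t. 0 \<le> t \<and> t < T \<longrightarrow> A \<inter> ball (a + t *\<^sub>R u) t = {}"
  shows "A \<inter> ball (a + T *\<^sub>R u) T = {}"
proof (rule ccontr)
  assume "A \<inter> ball (a + T *\<^sub>R u) T \<noteq> {}"
  then obtain x where x: "x \<in> A" "dist (a + T *\<^sub>R u) x < T" by auto
  define d where "d = dist (a + T *\<^sub>R u) x"
  define t where "t = (2 * T + d) / 3"
  have "0 \<le> d" "d < T" using x(2) by (simp_all add: d_def)
  then have t: "0 \<le> t" "t < T" unfolding t_def by auto
  have "dist (a + t *\<^sub>R u) (a + T *\<^sub>R u) = T - t"
    using assms(1) t by (simp add: dist_norm algebra_simps flip: scaleR_diff_left)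
  then have "dist (a + t *\<^sub>R u) x \<le> (T - t) + d"
    using dist_triangle[of "a + t *\<^sub>R u" x "a + T *\<^sub>R u"] d_def by linarith
  also have "\<dots> < t" unfolding t_def using \<open>d < T\<close> by (simp add: field_simps)
  finally have "x \<in> A \<inter> ball (a + t *\<^sub>R u) t" using x(1) by simp
  then show False using assms(2) t by blast
qed

lemma disjoint_ball_ray_iff:
  fixes a x :: "'a::real_inner"
  assumes "norm x = 1" "r > 0"
  shows "A \<inter> ball (a + r *\<^sub>R x) r = {} \<longleftrightarrow> (\<forall>b\<in>A. 2 * r * (x \<bullet> (b - a)) \<le> (norm (b - a))\<^sup>2)"
proof -
  have "(dist (a + r *\<^sub>R x) b)\<^sup>2 = (norm (b - a))\<^sup>2 - 2 * r * (x \<bullet> (b - a)) + r\<^sup>2" for b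
  proof -
    have "a + r *\<^sub>R x - b = r *\<^sub>R x - (b - a)" by (simp add: algebra_simps)
    then have "(dist (a + r *\<^sub>R x) b)\<^sup>2 = (r *\<^sub>R x - (b - a)) \<bullet> (r *\<^sub>R x - (b - a))"
      by (simp only: dist_norm power2_norm_eq_inner)
    also have "\<dots> = r\<^sup>2 * (x \<bullet> x) - 2 * r * (x \<bullet> (b - a)) + (b - a) \<bullet> (b - a)"
      by (simp add: inner_diff_left inner_diff_right inner_commute algebra_simps power2_eq_square)
    also have "(b - a) \<bullet> (b - a) = (norm (b - a))\<^sup>2" by (simp add: power2_norm_eq_inner)
    finally show ?thesis using assms(1) by (simp add: dot_square_norm)
  qed
  moreover have "r \<le> dist (a + r *\<^sub>R x) b \<longleftrightarrow> r\<^sup>2 \<le> (dist (a + r *\<^sub>R x) b)\<^sup>2" for b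
    using assms(2) by (simp add: abs_le_square_iff[symmetric])
  ultimately have "r \<le> dist (a + r *\<^sub>R x) b \<longleftrightarrow> 2 * r * (x \<bullet> (b - a)) \<le> (norm (b - a))\<^sup>2" for b
    by simp
  moreover have "A \<inter> ball (a + r *\<^sub>R x) r = {} \<longleftrightarrow> (\<forall>b\<in>A. r \<le> dist (a + r *\<^sub>R x) b)"
    by (auto simp: not_less)
  ultimately show ?thesis by simp
qed

lemma Brouwer_point_away_from_projection:
  fixes A :: "'a::euclidean_space set"
  assumes "closed A" "A \<noteq> {}" "h > 0" "cball z h \<inter> A = {}"
    and "continuous_on (cball z h) (closest_point A)"
  obtains w where "w \<in> cball z h"
    "z = w - (h / norm (w - closest_point A w)) *\<^sub>R (w - closest_point A w)"
proof -
  have pos: "norm (w - closest_point A w) > 0" if "w \<in> cball z h" for w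
    using that assms(4) closest_point_in_set[OF assms(1,2), of w] by auto
  define f where "f w = z + (h / norm (w - closest_point A w)) *\<^sub>R (w - closest_point A w)" for w
  have "continuous_on (cball z h) f"
    unfolding f_def by (intro continuous_intros assms(5)) (use pos in force)
  moreover have "f \<in> cball z h \<rightarrow> cball z h"
    using pos assms(3) by (auto simp: f_def dist_norm)
  ultimately obtain w where "w \<in> cball z h" "f w = w" using brouwer_ball[OF assms(3)] by blast
  then show thesis using that[of w] unfolding f_def by (metis add_diff_cancel_right')
qed

lemma disjoint_ball_ray_grows:
  fixes A :: "'a::euclidean_space set"
  assumes "closed A" "reach A \<ge> ereal R" "a \<in> A" "norm u = 1" "0 < T" "T < R"
    and disj: "A \<inter> ball (a + T *\<^sub>R u) T = {}"
  obtains h where "h > 0" "A \<inter> ball (a + (T + h) *\<^sub>R u) (T + h) = {}"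
proof -
  have ne: "A \<noteq> {}" using assms(3) by blast
  define z where "z = a + T *\<^sub>R u"
  have zfar: "\<forall>c\<in>A. dist z a \<le> dist z c" and za: "dist z a = T"
    using disj assms(4,5) by (auto simp: z_def dist_norm not_less)
  define h where "h = min (T / 2) ((R - T) / 2)"
  have h: "h > 0" "2 * h \<le> T" "T + h < R" using assms(5,6) unfolding h_def by (auto simp: min_def field_simps)
  have U: "w \<in> Unp A" if "w \<in> cball z h" for w
  proof -
    have "dist a w \<le> dist a z + dist z w" by (rule dist_triangle)
    then show ?thesis
      using that za h(3) mem_Unp_if_reach_ge[OF assms(2,3)] by (simp add: dist_commute)
  qed
  then have "continuous_on (cball z h) (closest_point A)"
    by (metis continuous_at_imp_continuous_on continuous_at_closest_point_Unp[OF assms(1) ne])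
  moreover have "cball z h \<inter> A = {}" using zfar za h by fastforce
  moreover have zU: "z \<in> Unp A" using U h(1) by simp
  ultimately obtain w where w: "w \<in> cball z h"
    and zw: "z = w - (h / norm (w - closest_point A w)) *\<^sub>R (w - closest_point A w)"
    using Brouwer_point_away_from_projection[OF assms(1) ne h(1)] by blast
  define b where "b = closest_point A w"
  define D where "D = norm (w - b)"
  have zw': "z = w - (h / D) *\<^sub>R (w - b)" using zw by (simp add: b_def D_def)
  have b: "b \<in> A" "\<forall>c\<in>A. dist w b \<le> dist w c"
    using closest_point_exists[OF assms(1) ne] b_def by auto
  have "T \<le> dist z b" using zfar za b(1) by simp
  also have "\<dots> \<le> dist z w + dist w b" by (rule dist_triangle)
  finally have D: "h \<le> D" "D > 0" using w h by (auto simp: D_def dist_norm)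
  have "\<forall>c\<in>A. dist z b \<le> dist z c"
    using nearest_point_along_segment[OF b(2), of "h / D"] D h(1) zw' by simp
  then have "closest_point A z = b"
    using closest_point_eq_if_Unp[OF assms(1) ne zU b(1)] by blast
  moreover have "closest_point A z = a"
    using closest_point_eq_if_Unp[OF assms(1) ne zU assms(3) zfar] .
  ultimately have "b = a" by simp
  have za': "z - a = (1 - h / D) *\<^sub>R (w - a)"
    using zw' \<open>b = a\<close> by (simp add: algebra_simps)
  then have "T = (1 - h / D) * D"
    using za D \<open>b = a\<close> by (simp add: dist_norm D_def norm_minus_commute)
  moreover have "(1 - h / D) * D = D - h" using D by (simp add: field_simps)
  ultimately have DT: "D = T + h" by simp
  then have "1 - h / D = T / D" using D by (simp add: field_simps)
  then have "T *\<^sub>R u = (T / D) *\<^sub>R (w - a)" using za' by (simp add: z_def)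
  then have "(D / T) *\<^sub>R (T *\<^sub>R u) = (D / T) *\<^sub>R ((T / D) *\<^sub>R (w - a))" by simp
  then have "w - a = D *\<^sub>R u" using D assms(5) by simp
  then have "w = a + (T + h) *\<^sub>R u" using DT by (simp add: algebra_simps)
  moreover have "A \<inter> ball w D = {}"
    using b(2) by (auto simp: D_def dist_norm not_less)
  ultimately show thesis using that[OF h(1)] DT by simp
qed

lemma disjoint_ball_ray_reach:
  fixes A :: "'a::euclidean_space set"
  assumes "closed A" "reach A \<ge> ereal R" "a \<in> A" "norm u = 1" "0 < s"
    and "A \<inter> ball (a + s *\<^sub>R u) s = {}"
  shows "A \<inter> ball (a + R *\<^sub>R u) R = {}"
proof (rule disjoint_ball_ray_limit[OF assms(4)], rule ccontr)
  assume "\<not> (\<forall>t. 0 \<le> t \<and> t < R \<longrightarrow> A \<inter> ball (a + t *\<^sub>R u) t = {})"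
  then obtain t0 where t0: "t0 < R" "A \<inter> ball (a + t0 *\<^sub>R u) t0 \<noteq> {}" by blast
  define S where "S = {t. A \<inter> ball (a + t *\<^sub>R u) t = {}}"
  have S_down: "t \<in> S" if "t \<le> t'" "t' \<in> S" for t t'
    using that ball_ray_mono[OF assms(4), of t t' a] unfolding S_def by blast
  have S_bound: "t \<le> t0" if "t \<in> S" for t
  proof (rule ccontr)
    assume "\<not> t \<le> t0"
    then have "t0 \<in> S" using S_down[of t0 t] that by simp
    then show False using t0(2) by (simp add: S_def)
  qed
  have "s \<in> S" using assms(6) by (simp add: S_def)
  then have S: "S \<noteq> {}" "bdd_above S" using bdd_aboveI[of S t0] S_bound by auto
  define T where "T = Sup S"
  have T: "s \<le> T" "T < R"
    using cSup_upper[OF \<open>s \<in> S\<close> S(2)] cSup_least[OF S(1) S_bound] t0(1) unfolding T_def by auto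
  have "t \<in> S" if t: "t < T" for t
  proof -
    obtain t' where "t' \<in> S" "t < t'" using less_cSup_iff[OF S, of t] t by (auto simp: T_def)
    then show ?thesis using S_down[of t t'] by simp
  qed
  then have "A \<inter> ball (a + T *\<^sub>R u) T = {}"
    using disjoint_ball_ray_limit[OF assms(4), of T A a] by (simp add: S_def)
  moreover have "0 < T" using T(1) assms(5) by simp
  ultimately obtain h where "h > 0" "A \<inter> ball (a + (T + h) *\<^sub>R u) (T + h) = {}"
    using disjoint_ball_ray_grows[OF assms(1-4) _ T(2)] by blast
  then have "T + h \<le> Sup S" using cSup_upper[OF _ S(2), of "T + h"] by (simp add: S_def)
  then show False using \<open>h > 0\<close> by (simp add: T_def)
qed

definition proximal_normal_cone :: "'a::real_inner set \<Rightarrow> 'a \<Rightarrow> 'a set" where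
  "proximal_normal_cone A a = {v. \<exists>\<sigma>\<ge>0. \<forall>b\<in>A. v \<bullet> (b - a) \<le> \<sigma> * (norm (b - a))\<^sup>2}"

lemma convex_proximal_normal_cone: "convex (proximal_normal_cone A a)"
  unfolding convex_def
proof (intro ballI allI impI)
  fix x y :: 'a and s t :: real
  assume "x \<in> proximal_normal_cone A a" "y \<in> proximal_normal_cone A a"
    and st: "0 \<le> s" "0 \<le> t" "s + t = 1"
  then obtain \<sigma> \<tau> where "\<sigma> \<ge> 0" "\<forall>b\<in>A. x \<bullet> (b - a) \<le> \<sigma> * (norm (b - a))\<^sup>2"
    and "\<tau> \<ge> 0" "\<forall>b\<in>A. y \<bullet> (b - a) \<le> \<tau> * (norm (b - a))\<^sup>2"
    unfolding proximal_normal_cone_def by blast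
  have "(s *\<^sub>R x + t *\<^sub>R y) \<bullet> (b - a) \<le> (s * \<sigma> + t * \<tau>) * (norm (b - a))\<^sup>2" if "b \<in> A" for b
  proof -
    have "s * (x \<bullet> (b - a)) \<le> s * (\<sigma> * (norm (b - a))\<^sup>2)"
      using \<open>\<forall>b\<in>A. x \<bullet> (b - a) \<le> \<sigma> * (norm (b - a))\<^sup>2\<close> that st(1) by (simp add: mult_left_mono)
    moreover have "t * (y \<bullet> (b - a)) \<le> t * (\<tau> * (norm (b - a))\<^sup>2)"
      using \<open>\<forall>b\<in>A. y \<bullet> (b - a) \<le> \<tau> * (norm (b - a))\<^sup>2\<close> that st(2) by (simp add: mult_left_mono)
    ultimately show ?thesis by (simp add: inner_add_left algebra_simps)
  qed
  moreover have "s * \<sigma> + t * \<tau> \<ge> 0" using st \<open>\<sigma> \<ge> 0\<close> \<open>\<tau> \<ge> 0\<close> by simp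
  ultimately show "s *\<^sub>R x + t *\<^sub>R y \<in> proximal_normal_cone A a"
    unfolding proximal_normal_cone_def by blast
qed

lemma cone_proximal_normal_cone: "cone (proximal_normal_cone A a)"
  unfolding cone_def
proof (intro ballI allI impI)
  fix v :: 'a and c :: real
  assume "v \<in> proximal_normal_cone A a" "c \<ge> 0"
  then obtain \<sigma> where "\<sigma> \<ge> 0" "\<forall>b\<in>A. v \<bullet> (b - a) \<le> \<sigma> * (norm (b - a))\<^sup>2"
    unfolding proximal_normal_cone_def by blast
  then have "\<forall>b\<in>A. (c *\<^sub>R v) \<bullet> (b - a) \<le> (c * \<sigma>) * (norm (b - a))\<^sup>2"
    using \<open>c \<ge> 0\<close> by (auto simp: mult.assoc intro: mult_left_mono)
  then show "c *\<^sub>R v \<in> proximal_normal_cone A a"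
    unfolding proximal_normal_cone_def using \<open>c \<ge> 0\<close> \<open>\<sigma> \<ge> 0\<close>
    by (intro CollectI exI[of _ "c * \<sigma>"]) simp
qed

lemma sph_convex_cone_Int_sphere:
  fixes K :: "'a::euclidean_space set"
  assumes "convex K" "cone K"
  shows "sph_convex (K \<inter> sphere 0 1)"
proof -
  define C where "C = {t *\<^sub>R v | t v. t \<ge> 0 \<and> v \<in> K \<inter> sphere 0 1}"
  have "C \<subseteq> K" using assms(2) unfolding C_def cone_def by blast
  then have "convex hull C \<subseteq> K" using assms(1) by (rule hull_minimal)
  moreover have "v \<in> convex hull C" if "v \<in> K \<inter> sphere 0 1" for v
  proof (rule hull_inc)
    show "v \<in> C" unfolding C_def using that by (intro CollectI exI[of _ 1] exI[of _ v]) simp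
  qed
  ultimately show ?thesis unfolding sph_convex_def C_def[symmetric] by blast
qed

lemma normals_R_eq_proximal_normal_cone:
  fixes A :: "'a::euclidean_space set"
  assumes "closed A" "reach A \<ge> ereal R" "R > 0" "a \<in> A"
  shows "normals_R R A a = proximal_normal_cone A a \<inter> sphere 0 1"
proof (intro equalityI subsetI)
  fix v assume "v \<in> normals_R R A a"
  then have v: "norm v = 1" "A \<inter> ball (a + R *\<^sub>R v) R = {}" by (auto simp: normals_R_def)
  then have "\<forall>b\<in>A. v \<bullet> (b - a) \<le> (1 / (2 * R)) * (norm (b - a))\<^sup>2"
    using disjoint_ball_ray_iff[OF v(1) assms(3)] assms(3) by (simp add: field_simps)
  moreover have "1 / (2 * R) \<ge> 0" using assms(3) by simp
  ultimately have "v \<in> proximal_normal_cone A a" unfolding proximal_normal_cone_def by blast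
  then show "v \<in> proximal_normal_cone A a \<inter> sphere 0 1" using v(1) by simp
next
  fix v assume "v \<in> proximal_normal_cone A a \<inter> sphere 0 1"
  then obtain \<sigma> where v: "norm v = 1" "\<sigma> \<ge> 0" "\<forall>b\<in>A. v \<bullet> (b - a) \<le> \<sigma> * (norm (b - a))\<^sup>2"
    unfolding proximal_normal_cone_def by auto
  define r where "r = 1 / (2 * (\<sigma> + 1))"
  have "r > 0" using v(2) by (simp add: r_def)
  have "2 * r * (v \<bullet> (b - a)) \<le> (norm (b - a))\<^sup>2" if "b \<in> A" for b
  proof -
    have "v \<bullet> (b - a) \<le> \<sigma> * (norm (b - a))\<^sup>2" using v(3) that by blast
    also have "\<dots> \<le> (\<sigma> + 1) * (norm (b - a))\<^sup>2" by (simp add: mult_right_mono)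
    finally show ?thesis using v(2) by (simp add: r_def field_simps)
  qed
  then have "A \<inter> ball (a + r *\<^sub>R v) r = {}"
    using disjoint_ball_ray_iff[OF v(1) \<open>r > 0\<close>] by blast
  then have "A \<inter> ball (a + R *\<^sub>R v) R = {}"
    by (rule disjoint_ball_ray_reach[OF assms(1,2,4) v(1) \<open>r > 0\<close>])
  then show "v \<in> normals_R R A a" using v(1) by (simp add: normals_R_def)
qed

lemma R_body_if_reach_ge:
  fixes A :: "'a::euclidean_space set"
  assumes "is_body A" "reach A \<ge> ereal R" "R > 0"
  shows "R_body R A"
  unfolding R_body_def
proof (intro conjI allI impI assms(1))
  have A: "closed A" "A \<noteq> {}" using assms(1) by (auto simp: is_body_def)
  fix y assume "y \<notin> A"
  define p where "p = closest_point A y"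
  define D where "D = dist y p"
  have p: "p \<in> A" "\<forall>b\<in>A. D \<le> dist y b"
    using closest_point_exists[OF A] by (auto simp: p_def D_def)
  have "D > 0" using p(1) \<open>y \<notin> A\<close> by (auto simp: D_def)
  define u where "u = (1 / D) *\<^sub>R (y - p)"
  have u: "norm u = 1" "p + D *\<^sub>R u = y"
    using \<open>D > 0\<close> by (auto simp: u_def D_def dist_norm norm_minus_commute)
  have "A \<inter> ball (p + D *\<^sub>R u) D = {}" unfolding u(2) using p(2) by (auto simp: not_less)
  then have disj: "A \<inter> ball (p + R *\<^sub>R u) R = {}"
    by (rule disjoint_ball_ray_reach[OF A(1) assms(2) p(1) u(1) \<open>D > 0\<close>])
  show "\<exists>c. y \<in> ball c R \<and> A \<inter> ball c R = {}"
  proof (cases "R \<le> D")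
    case True
    then have "A \<inter> ball y R = {}" using p(2) by (auto simp: not_less)
    then show ?thesis using assms(3) by (intro exI[of _ y]) auto
  next
    case False
    have "dist (p + R *\<^sub>R u) (p + D *\<^sub>R u) = R - D"
      using u(1) False by (simp add: dist_norm algebra_simps flip: scaleR_diff_left)
    then have "y \<in> ball (p + R *\<^sub>R u) R" using u(2) \<open>D > 0\<close> by auto
    then show ?thesis using disj by blast
  qed
qed

theorem mainTheorem18:
  fixes A :: "'a::euclidean_space set" and R :: real
  assumes "DIM('a) \<ge> 2"
    and "R > 0"
    and "is_body A"
    and "reach A \<ge> ereal R"
  shows "R_body R A \<and> (\<forall>a\<in>frontier A. sph_convex (normals_R R A a))"
proof
  show "R_body R A" using R_body_if_reach_ge[OF assms(3,4,2)] .
  have "closed A" using assms(3) by (simp add: is_body_def)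
  show "\<forall>a\<in>frontier A. sph_convex (normals_R R A a)"
  proof
    fix a assume "a \<in> frontier A"
    then have "a \<in> A" using frontier_subset_closed[OF \<open>closed A\<close>] by blast
    then show "sph_convex (normals_R R A a)"
      using normals_R_eq_proximal_normal_cone[OF \<open>closed A\<close> assms(4,2)]
        sph_convex_cone_Int_sphere[OF convex_proximal_normal_cone cone_proximal_normal_cone]
      by simp
  qed
qed

end
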